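(* Let $k\in\omega\setminus\{0,1\}$, let $\psi$ be a bounded complexity measure and let $T\in\mathcal M_k^\infty\setminus\mathcal M_k^{\infty c}$. Then $\psi^a(T)=\max\{M_\psi(T,\bar\delta):\bar\delta\in\Delta(T)\}$.
   Context: Notation: $\omega=\{0,1,2,\dots\}$; $\mathcal P(\omega)$ is the set of nonempty finite subsets of $\omega$; for $k\in\omega\setminus\{0,1\}$, $E_k=\{0,1,\dots,k-1\}$. $P=\{f_i:i\in\omega\}$ is a set of attributes, $f_i\neq f_j$ for $i\ne j$. Decision tables: $\mathcal M_k^\infty$ is the set of rectangular tables filled with numbers from $E_k$, whose columns are labeled with pairwise different attributes from $P$, whose rows are pairwise different, and each row of which is labeled with a set from $\mathcal P(\omega)$ (its set of decisions). The empty table (no rows) is denoted $\Lambda$ and belongs to $\mathcal M_k^\infty$. For $T\in\mathcal M_k^\infty$: $\Delta(T)$ is the set of rows; $\Pi(T)$ is the intersection of the decision sets of all rows (common decisions); $\mathcal M_k^{\infty c}$ is the set of tables having at least one common decision, and $\Lambda\in\mathcal M_k^{\infty c}$; $\mathrm{At}(T)$ is the set of attributes labeling columns. For nonempty $T$ and a word $\alpha=(f_{i_1},\delta_1)\cdots(f_{i_m},\delta_m)$ with $f_{i_j}\in\mathrm{At}(T)$, $\delta_j\in E_k$, $T\alpha$ is the subtable of $T$ consisting of the rows having value $\delta_j$ in the column $f_{i_j}$ for all $j$; for the empty word $\lambda$, $T\lambda=T$. Decision trees: a $k$-decision tree is a finite directed rooted tree with at least two nodes in which the root and the edges leaving the root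 are unlabeled, each terminal node is labeled with a decision from $\omega$, and each other node is labeled with an attribute from $P$, each edge leaving such a node being labeled with a number from $E_k$. $\mathrm{At}(\Gamma)$ is the set of attributes labeling nodes of $\Gamma$. For a complete path $\tau=v_1,d_1,\dots,v_m,d_m,v_{m+1}$ (from the root to a terminal node), $\pi(\tau)=\lambda$ if $m=1$, and otherwise $\pi(\tau)=(f_{i_2},\delta_2)\cdots(f_{i_m},\delta_m)$ where $v_j$ is labeled $f_{i_j}$ and $d_j$ is labeled $\delta_j$; $T(\tau)=T\pi(\tau)$. For $T\ne\Lambda$, a nondeterministic decision tree for $T$ is a $k$-decision tree $\Gamma$ with $\mathrm{At}(\Gamma)\subseteq\mathrm{At}(T)$ such that every row of $T$ belongs to $T(\tau)$ for some complete path $\tau$, and for every complete path $\tau$ either $T(\tau)=\Lambda$ or the decision at the terminal node of $\tau$ belongs to $\Pi(T(\tau))$. Complexity measures: a partially bounded complexity measure is a function $\psi:P^*\to\omega$ on finite words over $P$ such that for all words $\alpha_1,\alpha_2$: $\psi(\alpha_1)=0$ iff $\alpha_1=\lambda$; $\psi(\alpha_1)$ is invariant under permutation of letters; $\psi(\alpha_1)\le\psi(\alpha_1\alpha_2)$; $\psi(\alpha_1\alpha_2)\le\psi(\alpha_1)+\psi(\alpha_2)$. It is bounded if in addition $\psi(\alpha)\ge|\alpha|$ for all $\alpha$. $\psi$ is extended to words $(f_{i_1},\delta_1)\cdots(f_{i_m},\delta_m)$ by $\psi(f_{i_1}\cdots f_{i_m})$ ($\psi(\lambda)=0$). For a $k$-decision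 tree $\Gamma$, $\psi(\Gamma)=\max_\tau\psi(\pi(\tau))$ over complete paths. For $T\ne\Lambda$, $\psi^a(T)$ is the minimum of $\psi(\Gamma)$ over nondeterministic decision trees $\Gamma$ for $T$. $M_\psi(T,\bar\delta)$: let $T\notin\mathcal M_k^{\infty c}$ have columns labeled $f_{t_1},\dots,f_{t_n}$ (in this order). For $\bar\delta=(\delta_1,\dots,\delta_n)\in E_k^n$, $M_\psi(T,\bar\delta)$ is the minimum number $p\in\omega$ for which there exist attributes $f_{t_{i_1}},\dots,f_{t_{i_m}}\in\mathrm{At}(T)$ ($m\ge0$) such that $T(f_{t_{i_1}},\delta_{i_1})\cdots(f_{t_{i_m}},\delta_{i_m})\in\mathcal M_k^{\infty c}$ and $\psi(f_{t_{i_1}}\cdots f_{t_{i_m}})=p$. *)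

theory Defs
  imports Main "HOL-Library.Multiset"
begin

text \<open>Attributes f_i are represented by their indices i :: nat; decisions are nats.
  Words over P are nat lists; words (f,delta) are (nat * nat) lists.\<close>

record dtable =
  cols :: "nat list"
  rows :: "nat list set"
  dec  :: "nat list \<Rightarrow> nat set"

definition is_table :: "nat \<Rightarrow> dtable \<Rightarrow> bool" where
  "is_table k T \<longleftrightarrow> distinct (cols T) \<and> finite (rows T) \<and>
     (\<forall>r\<in>rows T. length r = length (cols T) \<and> (\<forall>v\<in>set r. v < k)) \<and>
     (\<forall>r\<in>rows T. finite (dec T r) \<and> dec T r \<noteq> {})"

definition common_dec :: "dtable \<Rightarrow> nat set" where
  "common_dec T = (\<Inter>r\<in>rows T. dec T r)"

definition in_Mc :: "dtable \<Rightarrow> bool" where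
  "in_Mc T \<longleftrightarrow> rows T = {} \<or> common_dec T \<noteq> {}"

definition sub :: "dtable \<Rightarrow> (nat \<times> nat) list \<Rightarrow> dtable" where
  "sub T \<alpha> = T\<lparr>rows := {r \<in> rows T. \<forall>(f,d)\<in>set \<alpha>. \<forall>i<length (cols T).
       cols T ! i = f \<longrightarrow> r ! i = d}\<rparr>"

text \<open>Subtrees hanging below the (unlabeled) root: a terminal node labeled with a decision,
  or a node labeled with an attribute with labeled outgoing edges.\<close>
datatype dtree = Leaf nat | Node nat "(nat \<times> dtree) list"

inductive wf_sub :: "nat \<Rightarrow> dtree \<Rightarrow> bool" for k where
  "wf_sub k (Leaf d)"
| "es \<noteq> [] \<Longrightarrow> (\<And>\<delta> t. (\<delta>, t) \<in> set es \<Longrightarrow> \<delta> < k \<and> wf_sub k t) \<Longrightarrow> wf_sub k (Node f es)"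

inductive path :: "dtree \<Rightarrow> (nat \<times> nat) list \<Rightarrow> nat \<Rightarrow> bool" where
  "path (Leaf d) [] d"
| "(\<delta>, t) \<in> set es \<Longrightarrow> path t w d \<Longrightarrow> path (Node f es) ((f, \<delta>) # w) d"

inductive attr_in :: "nat \<Rightarrow> dtree \<Rightarrow> bool" where
  "attr_in f (Node f es)"
| "(\<delta>, t) \<in> set es \<Longrightarrow> attr_in g t \<Longrightarrow> attr_in g (Node f es)"

text \<open>A k-decision tree is given by the nonempty list of subtrees below the root.\<close>
definition k_tree :: "nat \<Rightarrow> dtree list \<Rightarrow> bool" where
  "k_tree k \<Gamma> \<longleftrightarrow> \<Gamma> \<noteq> [] \<and> (\<forall>t\<in>set \<Gamma>. wf_sub k t)"

definition attrs :: "dtree list \<Rightarrow> nat set" where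
  "attrs \<Gamma> = {f. \<exists>t\<in>set \<Gamma>. attr_in f t}"

definition cpath :: "dtree list \<Rightarrow> (nat \<times> nat) list \<Rightarrow> nat \<Rightarrow> bool" where
  "cpath \<Gamma> w d \<longleftrightarrow> (\<exists>t\<in>set \<Gamma>. path t w d)"

definition partially_bounded_cm :: "(nat list \<Rightarrow> nat) \<Rightarrow> bool" where
  "partially_bounded_cm \<psi> \<longleftrightarrow>
     (\<forall>a. \<psi> a = 0 \<longleftrightarrow> a = []) \<and>
     (\<forall>a b. mset a = mset b \<longrightarrow> \<psi> a = \<psi> b) \<and>
     (\<forall>a b. \<psi> a \<le> \<psi> (a @ b)) \<and>
     (\<forall>a b. \<psi> (a @ b) \<le> \<psi> a + \<psi> b)"

definition bounded_cm :: "(nat list \<Rightarrow> nat) \<Rightarrow> bool" where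
  "bounded_cm \<psi> \<longleftrightarrow> partially_bounded_cm \<psi> \<and> (\<forall>a. length a \<le> \<psi> a)"

definition psi_word :: "(nat list \<Rightarrow> nat) \<Rightarrow> (nat \<times> nat) list \<Rightarrow> nat" where
  "psi_word \<psi> \<alpha> = \<psi> (map fst \<alpha>)"

definition psi_tree :: "(nat list \<Rightarrow> nat) \<Rightarrow> dtree list \<Rightarrow> nat" where
  "psi_tree \<psi> \<Gamma> = Max {psi_word \<psi> w | w d. cpath \<Gamma> w d}"

definition nd_tree :: "nat \<Rightarrow> dtable \<Rightarrow> dtree list \<Rightarrow> bool" where
  "nd_tree k T \<Gamma> \<longleftrightarrow> k_tree k \<Gamma> \<and> attrs \<Gamma> \<subseteq> set (cols T) \<and>
     (\<forall>r\<in>rows T. \<exists>w d. cpath \<Gamma> w d \<and> r \<in> rows (sub T w)) \<and>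
     (\<forall>w d. cpath \<Gamma> w d \<longrightarrow> rows (sub T w) = {} \<or> d \<in> common_dec (sub T w))"

definition psi_a :: "nat \<Rightarrow> (nat list \<Rightarrow> nat) \<Rightarrow> dtable \<Rightarrow> nat" where
  "psi_a k \<psi> T = (LEAST p. \<exists>\<Gamma>. nd_tree k T \<Gamma> \<and> psi_tree \<psi> \<Gamma> = p)"

text \<open>M_psi(T, delta): chosen columns are given by a list of column positions is.\<close>
definition M_psi :: "(nat list \<Rightarrow> nat) \<Rightarrow> dtable \<Rightarrow> nat list \<Rightarrow> nat" where
  "M_psi \<psi> T \<delta> = (LEAST p. \<exists>is. set is \<subseteq> {..<length (cols T)} \<and>
      in_Mc (sub T (map (\<lambda>i. (cols T ! i, \<delta> ! i)) is)) \<and>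
      \<psi> (map (\<lambda>i. cols T ! i) is) = p)"

end

theory Submission
  imports Defs
begin

text \<open>A nondeterministic decision tree only has to recognise each row along some complete path
  whose word already pins down a subtable with a common decision. Reading the attributes of that
  path as columns gives, for every row \<open>r\<close>, a candidate in the definition of
  \<open>M_psi \<psi> T r\<close>, so \<open>psi_a k \<psi> T\<close> bounds every \<open>M_psi \<psi> T r\<close>. Conversely, the forest
  consisting of one chain per row, following an optimal set of columns for that row and ending in
  a common decision of the resulting subtable, is a nondeterministic decision tree whose complexity
  is the maximum of the \<open>M_psi \<psi> T r\<close>.\<close>

lemma finite_paths: "finite {(w, d). path t w d}"
proof (induction t)
  case (Leaf x)
  have "{(w, d). path (Leaf x) w d} = {([], x)}"
    by (auto elim: path.cases intro: path.intros)
  then show ?case by simp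
next
  case (Node f es)
  have "{(w, d). path (Node f es) w d} \<subseteq>
      (\<Union>(\<delta>, t)\<in>set es. (\<lambda>(w, d). ((f, \<delta>) # w, d)) ` {(w, d). path t w d})"
    by (force elim: path.cases)
  moreover have "finite (\<Union>(\<delta>, t)\<in>set es. (\<lambda>(w, d). ((f, \<delta>) # w, d)) ` {(w, d). path t w d})"
    using Node by auto
  ultimately show ?case by (rule finite_subset)
qed

lemma attr_in_if_path: "path t w d \<Longrightarrow> f \<in> fst ` set w \<Longrightarrow> attr_in f t"
  by (induction rule: path.induct) (auto intro: attr_in.intros)

lemma psi_word_le_psi_tree:
  assumes "cpath \<Gamma> w d"
  shows "psi_word \<psi> w \<le> psi_tree \<psi> \<Gamma>"
proof -
  have "{psi_word \<psi> w | w d. cpath \<Gamma> w d} \<subseteq>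
      (\<lambda>(w, d). psi_word \<psi> w) ` (\<Union>t\<in>set \<Gamma>. {(w, d). path t w d})"
    unfolding cpath_def by auto
  moreover have "finite ((\<lambda>(w, d). psi_word \<psi> w) ` (\<Union>t\<in>set \<Gamma>. {(w, d). path t w d}))"
    using finite_paths by auto
  ultimately have "finite {psi_word \<psi> w | w d. cpath \<Gamma> w d}"
    by (rule finite_subset)
  then show ?thesis
    unfolding psi_tree_def using assms by (intro Max_ge) auto
qed

fun chain :: "(nat \<times> nat) list \<Rightarrow> nat \<Rightarrow> dtree" where
  "chain [] d = Leaf d"
| "chain ((f, \<delta>) # w) d = Node f [(\<delta>, chain w d)]"

lemma path_chain_iff: "path (chain w d) w' d' \<longleftrightarrow> w' = w \<and> d' = d"
proof (induction w d arbitrary: w' rule: chain.induct)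
  case (1 d)
  then show ?case by (auto elim: path.cases intro: path.intros)
next
  case (2 f \<delta> w d)
  have "path (Node f [(\<delta>, chain w d)]) w' d' \<longleftrightarrow> (\<exists>w''. w' = (f, \<delta>) # w'' \<and> path (chain w d) w'' d')"
    by (auto elim: path.cases intro: path.intros)
  then show ?case
    using "2.IH" by auto
qed

lemma wf_sub_chain: "\<forall>p\<in>set w. snd p < k \<Longrightarrow> wf_sub k (chain w d)"
  by (induction w d rule: chain.induct) (auto intro: wf_sub.intros)

lemma attr_in_chain: "attr_in f (chain w d) \<Longrightarrow> f \<in> fst ` set w"
  by (induction w d rule: chain.induct) (auto elim: attr_in.cases)

lemma cpath_chains_iff:
  "cpath (map (\<lambda>x. chain (c x) (e x)) xs) w d \<longleftrightarrow> (\<exists>x\<in>set xs. w = c x \<and> d = e x)"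
  unfolding cpath_def by (auto simp: path_chain_iff)

lemma psi_tree_chains:
  "psi_tree \<psi> (map (\<lambda>x. chain (c x) (e x)) xs) = Max ((\<lambda>x. psi_word \<psi> (c x)) ` set xs)"
proof -
  have "{psi_word \<psi> w | w d. cpath (map (\<lambda>x. chain (c x) (e x)) xs) w d} =
      (\<lambda>x. psi_word \<psi> (c x)) ` set xs"
    unfolding cpath_chains_iff by auto
  then show ?thesis unfolding psi_tree_def by simp
qed

lemma attrs_chains: "attrs (map (\<lambda>x. chain (c x) (e x)) xs) \<subseteq> (\<Union>x\<in>set xs. fst ` set (c x))"
  unfolding attrs_def by (auto dest: attr_in_chain)

definition row_word :: "dtable \<Rightarrow> nat list \<Rightarrow> nat list \<Rightarrow> (nat \<times> nat) list" where
  "row_word T r is = map (\<lambda>i. (cols T ! i, r ! i)) is"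

lemma M_psi_row_word:
  "M_psi \<psi> T r = (LEAST p. \<exists>is. set is \<subseteq> {..<length (cols T)} \<and>
      in_Mc (sub T (row_word T r is)) \<and> psi_word \<psi> (row_word T r is) = p)"
  unfolding M_psi_def row_word_def psi_word_def by (simp add: comp_def)

lemma in_rows_sub_row_word:
  assumes "distinct (cols T)" and "r \<in> rows T" and "set is \<subseteq> {..<length (cols T)}"
  shows "r \<in> rows (sub T (row_word T r is))"
proof -
  have "r ! j = r ! i" if "cols T ! j = cols T ! i" "j < length (cols T)" "i < length (cols T)"
    for i j
    using assms(1) that by (simp add: nth_eq_iff_index_eq)
  then show ?thesis
    using assms(2,3) unfolding sub_def row_word_def by auto
qed

lemma rows_sub_all_columns:
  assumes "is_table k T" and "r \<in> rows T"
  shows "rows (sub T (row_word T r [0..<length (cols T)])) = {r}"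
proof
  have "distinct (cols T)"
    using assms(1) by (simp add: is_table_def)
  then show "{r} \<subseteq> rows (sub T (row_word T r [0..<length (cols T)]))"
    using in_rows_sub_row_word[OF _ assms(2), of "[0..<length (cols T)]"]
    by (auto simp: atLeast0LessThan)
  show "rows (sub T (row_word T r [0..<length (cols T)])) \<subseteq> {r}"
  proof
    fix r' assume r': "r' \<in> rows (sub T (row_word T r [0..<length (cols T)]))"
    then have "r' \<in> rows T" by (simp add: sub_def)
    moreover have "r' ! i = r ! i" if "i < length (cols T)" for i
      using r' that unfolding sub_def row_word_def by fastforce
    ultimately show "r' \<in> {r}"
      using assms unfolding is_table_def by (auto intro: nth_equalityI)
  qed
qed

lemma M_psi_attained:
  assumes "is_table k T" and "r \<in> rows T"
  shows "\<exists>is. set is \<subseteq> {..<length (cols T)} \<and> in_Mc (sub T (row_word T r is)) \<and>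
    psi_word \<psi> (row_word T r is) = M_psi \<psi> T r"
proof -
  have "dec T r \<noteq> {}"
    using assms unfolding is_table_def by auto
  then have "in_Mc (sub T (row_word T r [0..<length (cols T)]))"
    using rows_sub_all_columns[OF assms]
    unfolding in_Mc_def common_dec_def by (simp add: sub_def)
  moreover have "set [0..<length (cols T)] \<subseteq> {..<length (cols T)}"
    by auto
  ultimately have "\<exists>p is. set is \<subseteq> {..<length (cols T)} \<and> in_Mc (sub T (row_word T r is)) \<and>
      psi_word \<psi> (row_word T r is) = p"
    by blast
  from LeastI_ex[OF this] show ?thesis
    unfolding M_psi_row_word .
qed

lemma M_psi_le:
  assumes "set is \<subseteq> {..<length (cols T)}" and "in_Mc (sub T (row_word T r is))"
  shows "M_psi \<psi> T r \<le> psi_word \<psi> (row_word T r is)"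
  unfolding M_psi_row_word using assms by (intro Least_le) blast

lemma row_word_if_in_rows_sub:
  assumes "r \<in> rows (sub T w)" and "fst ` set w \<subseteq> set (cols T)"
  obtains "is" where "set is \<subseteq> {..<length (cols T)}" and "row_word T r is = w"
  using assms
proof (induction w arbitrary: thesis)
  case Nil
  then show ?case by (auto simp: row_word_def)
next
  case (Cons p w)
  obtain f \<delta> where p: "p = (f, \<delta>)" by fastforce
  have "r \<in> rows (sub T w)"
    using Cons.prems(2) by (auto simp: sub_def)
  then obtain "is" where "is": "set is \<subseteq> {..<length (cols T)}" "row_word T r is = w"
    using Cons.IH Cons.prems(3) by auto
  obtain i where i: "i < length (cols T)" "cols T ! i = f"
    using Cons.prems(3) p by (auto simp: in_set_conv_nth)
  then have "r ! i = \<delta>"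
    using Cons.prems(2) p unfolding sub_def by fastforce
  then show ?case
    using Cons.prems(1)[of "i # is"] "is" i p by (simp add: row_word_def)
qed

lemma psi_a_le_psi_tree: "nd_tree k T \<Gamma> \<Longrightarrow> psi_a k \<psi> T \<le> psi_tree \<psi> \<Gamma>"
  unfolding psi_a_def by (rule Least_le) blast

lemma psi_a_attained:
  assumes "nd_tree k T \<Gamma>"
  obtains \<Gamma>\<^sub>0 where "nd_tree k T \<Gamma>\<^sub>0" and "psi_tree \<psi> \<Gamma>\<^sub>0 = psi_a k \<psi> T"
proof -
  have "\<exists>p \<Gamma>. nd_tree k T \<Gamma> \<and> psi_tree \<psi> \<Gamma> = p"
    using assms by blast
  then have "\<exists>\<Gamma>. nd_tree k T \<Gamma> \<and> psi_tree \<psi> \<Gamma> = psi_a k \<psi> T"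
    unfolding psi_a_def by (rule LeastI_ex)
  then show ?thesis
    using that by blast
qed

lemma M_psi_le_psi_tree:
  assumes "nd_tree k T \<Gamma>" and "r \<in> rows T"
  shows "M_psi \<psi> T r \<le> psi_tree \<psi> \<Gamma>"
proof -
  have covers: "\<forall>r\<in>rows T. \<exists>w d. cpath \<Gamma> w d \<and> r \<in> rows (sub T w)"
    and attrs: "attrs \<Gamma> \<subseteq> set (cols T)"
    and decides: "\<forall>w d. cpath \<Gamma> w d \<longrightarrow> rows (sub T w) = {} \<or> d \<in> common_dec (sub T w)"
    using assms(1) unfolding nd_tree_def by auto
  obtain w d where path: "cpath \<Gamma> w d" and r: "r \<in> rows (sub T w)"
    using covers assms(2) by blast
  have "fst ` set w \<subseteq> set (cols T)"
    using path attrs attr_in_if_path unfolding cpath_def attrs_def by blast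
  with r obtain "is" where "is": "set is \<subseteq> {..<length (cols T)}" "row_word T r is = w"
    by (rule row_word_if_in_rows_sub)
  have "in_Mc (sub T (row_word T r is))"
    using decides path r "is"(2) unfolding in_Mc_def by blast
  then have "M_psi \<psi> T r \<le> psi_word \<psi> (row_word T r is)"
    by (rule M_psi_le[OF "is"(1)])
  also have "\<dots> = psi_word \<psi> w"
    using "is"(2) by simp
  also have "\<dots> \<le> psi_tree \<psi> \<Gamma>"
    using path by (rule psi_word_le_psi_tree)
  finally show ?thesis .
qed

lemma snd_row_word_less:
  assumes "is_table k T" and "r \<in> rows T" and "set is \<subseteq> {..<length (cols T)}"
  shows "\<forall>p\<in>set (row_word T r is). snd p < k"
  using assms unfolding is_table_def row_word_def by fastforce

lemma fst_row_word_subset: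
  "set is \<subseteq> {..<length (cols T)} \<Longrightarrow> fst ` set (row_word T r is) \<subseteq> set (cols T)"
  unfolding row_word_def by auto

lemma nd_tree_with_psi_tree_Max_M_psi:
  assumes "is_table k T" and "rows T \<noteq> {}"
  obtains \<Gamma> where "nd_tree k T \<Gamma>" and "psi_tree \<psi> \<Gamma> = Max (M_psi \<psi> T ` rows T)"
proof -
  have distinct: "distinct (cols T)"
    using assms(1) by (simp add: is_table_def)
  have "\<forall>r\<in>rows T. \<exists>is. set is \<subseteq> {..<length (cols T)} \<and> in_Mc (sub T (row_word T r is)) \<and>
      psi_word \<psi> (row_word T r is) = M_psi \<psi> T r"
    using M_psi_attained[OF assms(1)] by blast
  from bchoice[OF this] obtain IS where IS: "\<forall>r\<in>rows T. set (IS r) \<subseteq> {..<length (cols T)} \<and>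
      in_Mc (sub T (row_word T r (IS r))) \<and> psi_word \<psi> (row_word T r (IS r)) = M_psi \<psi> T r"
    by blast
  have IS_cols: "set (IS r) \<subseteq> {..<length (cols T)}" if "r \<in> rows T" for r
    using IS that by blast
  have row_in_sub: "r \<in> rows (sub T (row_word T r (IS r)))" if "r \<in> rows T" for r
    using in_rows_sub_row_word[OF distinct that IS_cols[OF that]] .
  define D where "D r = (SOME d. d \<in> common_dec (sub T (row_word T r (IS r))))" for r
  have D: "D r \<in> common_dec (sub T (row_word T r (IS r)))" if "r \<in> rows T" for r
  proof -
    have "common_dec (sub T (row_word T r (IS r))) \<noteq> {}"
      using IS that row_in_sub[OF that] unfolding in_Mc_def by blast
    then show ?thesis
      unfolding D_def by (rule some_in_eq[THEN iffD2])
  qed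
  have "finite (rows T)"
    using assms(1) by (simp add: is_table_def)
  then obtain rs where rs: "set rs = rows T"
    using finite_list by blast
  have psi_words: "(\<lambda>r. psi_word \<psi> (row_word T r (IS r))) ` rows T = M_psi \<psi> T ` rows T"
    using IS by (intro image_cong) auto
  define \<Gamma> where "\<Gamma> = map (\<lambda>r. chain (row_word T r (IS r)) (D r)) rs"
  have "wf_sub k (chain (row_word T r (IS r)) (D r))" if "r \<in> rows T" for r
    by (rule wf_sub_chain[OF snd_row_word_less[OF assms(1) that IS_cols[OF that]]])
  then have "k_tree k \<Gamma>"
    unfolding k_tree_def \<Gamma>_def using assms(2) rs by auto
  moreover have "attrs \<Gamma> \<subseteq> set (cols T)"
  proof -
    have "attrs \<Gamma> \<subseteq> (\<Union>r\<in>set rs. fst ` set (row_word T r (IS r)))"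
      unfolding \<Gamma>_def by (rule attrs_chains)
    also have "\<dots> \<subseteq> set (cols T)"
      using fst_row_word_subset[OF IS_cols] unfolding rs by blast
    finally show ?thesis .
  qed
  moreover have "\<exists>w d. cpath \<Gamma> w d \<and> r \<in> rows (sub T w)" if "r \<in> rows T" for r
    using that row_in_sub rs unfolding \<Gamma>_def cpath_chains_iff by blast
  moreover have "d \<in> common_dec (sub T w)" if "cpath \<Gamma> w d" for w d
    using that D rs unfolding \<Gamma>_def cpath_chains_iff by auto
  ultimately have "nd_tree k T \<Gamma>"
    unfolding nd_tree_def by blast
  moreover have "psi_tree \<psi> \<Gamma> = Max (M_psi \<psi> T ` rows T)"
    unfolding \<Gamma>_def psi_tree_chains rs using psi_words by simp
  ultimately show ?thesis
    by (rule that)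
qed

theorem lemma6:
  fixes k :: nat and \<psi> :: "nat list \<Rightarrow> nat" and T :: dtable
  assumes "k \<ge> 2" and "bounded_cm \<psi>" and "is_table k T" and "\<not> in_Mc T"
  shows "psi_a k \<psi> T = Max ((M_psi \<psi> T) ` rows T)"
proof (rule antisym)
  have rows: "finite (rows T)" "rows T \<noteq> {}"
    using assms(3,4) unfolding is_table_def in_Mc_def by auto
  obtain \<Gamma> where \<Gamma>: "nd_tree k T \<Gamma>" "psi_tree \<psi> \<Gamma> = Max (M_psi \<psi> T ` rows T)"
    using nd_tree_with_psi_tree_Max_M_psi[OF assms(3) rows(2)] .
  then show "psi_a k \<psi> T \<le> Max (M_psi \<psi> T ` rows T)"
    using psi_a_le_psi_tree by metis
  obtain \<Gamma>\<^sub>0 where \<Gamma>\<^sub>0: "nd_tree k T \<Gamma>\<^sub>0" "psi_tree \<psi> \<Gamma>\<^sub>0 = psi_a k \<psi> T"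
    using psi_a_attained[OF \<Gamma>(1)] .
  have "M_psi \<psi> T r \<le> psi_a k \<psi> T" if "r \<in> rows T" for r
    using M_psi_le_psi_tree[OF \<Gamma>\<^sub>0(1) that, where \<psi>=\<psi>] \<Gamma>\<^sub>0(2) by simp
  then show "Max (M_psi \<psi> T ` rows T) \<le> psi_a k \<psi> T"
    using rows by simp
qed

end
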